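(* Let $k$ be a positive integer and $G$ a finite graph. (1) If $(A,B)$ is a separation of $G$ with $\theta(G[A\cap B])=k$, then $(\widetilde{A},\widetilde{B})$ is a separation of $\widetilde{G}$ with $|\widetilde{A}\cap\widetilde{B}|\le k\cdot\widetilde{\omega}(G)$. (2) If $(X,Y)$ is a separation of $\widetilde{G}$ with $|X\cap Y|=k$, then $(\bigcup X,\bigcup Y)$ is a separation of $G$ with $\theta(G[\bigcup X\cap\bigcup Y])\le k$.
   Context: Two vertices of $G$ are equivalent if they lie in exactly the same maximal cliques of $G$. The clique-quotient graph $\widetilde{G}$ has the equivalence classes as vertices, two distinct classes adjacent iff their representatives are adjacent in $G$. For $A\subseteq V(G)$, $\widetilde{A}$ is the set of equivalence classes containing an element of $A$; for a set $X$ of classes, $\bigcup X$ is the set of all vertices of $G$ lying in a class of $X$. A separation of a graph $H$ is a pair $(A,B)$ of subsets of $V(H)$ with no edge between $A\setminus B$ and $B\setminus A$. $\theta$ is the clique-cover number, and $\widetilde{\omega}(G)$ is the maximum over maximal cliques $K$ of $G$ of the number of equivalence classes meeting $K$. *)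

theory Defs
  imports Main
begin

definition graph :: "'a set \<Rightarrow> ('a \<Rightarrow> 'a \<Rightarrow> bool) \<Rightarrow> bool" where
  "graph V E \<longleftrightarrow> finite V \<and> (\<forall>x y. E x y \<longrightarrow> x \<in> V \<and> y \<in> V)
     \<and> (\<forall>x y. E x y \<longrightarrow> E y x) \<and> (\<forall>x. \<not> E x x)"

definition clique :: "'a set \<Rightarrow> ('a \<Rightarrow> 'a \<Rightarrow> bool) \<Rightarrow> 'a set \<Rightarrow> bool" where
  "clique V E K \<longleftrightarrow> K \<subseteq> V \<and> (\<forall>x\<in>K. \<forall>y\<in>K. x \<noteq> y \<longrightarrow> E x y)"

definition max_clique :: "'a set \<Rightarrow> ('a \<Rightarrow> 'a \<Rightarrow> bool) \<Rightarrow> 'a set \<Rightarrow> bool" where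
  "max_clique V E K \<longleftrightarrow> clique V E K \<and> (\<forall>K'. clique V E K' \<and> K \<subseteq> K' \<longrightarrow> K' = K)"

definition cq_equiv :: "'a set \<Rightarrow> ('a \<Rightarrow> 'a \<Rightarrow> bool) \<Rightarrow> 'a \<Rightarrow> 'a \<Rightarrow> bool" where
  "cq_equiv V E u v \<longleftrightarrow> u \<in> V \<and> v \<in> V \<and>
     (\<forall>K. max_clique V E K \<longrightarrow> (u \<in> K \<longleftrightarrow> v \<in> K))"

definition cq_class :: "'a set \<Rightarrow> ('a \<Rightarrow> 'a \<Rightarrow> bool) \<Rightarrow> 'a \<Rightarrow> 'a set" where
  "cq_class V E v = {u. cq_equiv V E v u}"

definition cq_V :: "'a set \<Rightarrow> ('a \<Rightarrow> 'a \<Rightarrow> bool) \<Rightarrow> 'a set set" where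
  "cq_V V E = cq_class V E ` V"

definition cq_E :: "'a set \<Rightarrow> ('a \<Rightarrow> 'a \<Rightarrow> bool) \<Rightarrow> 'a set \<Rightarrow> 'a set \<Rightarrow> bool" where
  "cq_E V E X Y \<longleftrightarrow> X \<in> cq_V V E \<and> Y \<in> cq_V V E \<and> X \<noteq> Y \<and>
     (\<exists>x\<in>X. \<exists>y\<in>Y. E x y)"

definition cq_tilde :: "'a set \<Rightarrow> ('a \<Rightarrow> 'a \<Rightarrow> bool) \<Rightarrow> 'a set \<Rightarrow> 'a set set" where
  "cq_tilde V E A = {X \<in> cq_V V E. X \<inter> A \<noteq> {}}"

definition separation :: "'b set \<Rightarrow> ('b \<Rightarrow> 'b \<Rightarrow> bool) \<Rightarrow> 'b set \<Rightarrow> 'b set \<Rightarrow> bool" where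
  "separation W F A B \<longleftrightarrow> A \<subseteq> W \<and> B \<subseteq> W \<and>
     (\<forall>x\<in>A - B. \<forall>y\<in>B - A. \<not> F x y)"

definition theta :: "'a set \<Rightarrow> ('a \<Rightarrow> 'a \<Rightarrow> bool) \<Rightarrow> 'a set \<Rightarrow> nat" where
  "theta V E S = (LEAST n. \<exists>C. finite C \<and> card C = n \<and>
      (\<forall>K\<in>C. clique V E K \<and> K \<subseteq> S) \<and> \<Union>C = S)"

definition omega_tilde :: "'a set \<Rightarrow> ('a \<Rightarrow> 'a \<Rightarrow> bool) \<Rightarrow> nat" where
  "omega_tilde V E = Max {card {X \<in> cq_V V E. X \<inter> K \<noteq> {}} | K. max_clique V E K}"

end

theory Submission
  imports Defs
begin

text \<open>Every clique extends to a maximal one and each class of the equivalence is a clique, since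
  two equivalent vertices share a maximal clique. Hence a class meeting both sides of a separation
  \<open>(A, B)\<close> meets \<open>A \<inter> B\<close>, and extending each clique of an optimal clique cover of \<open>A \<inter> B\<close> to a
  maximal clique shows that it meets at most \<open>\<widetilde>\<omega>(G)\<close> classes. Conversely the classes
  partition \<open>V\<close>, so for a separation \<open>(X, Y)\<close> of the quotient the classes in \<open>X \<inter> Y\<close> form a
  clique cover of \<open>\<Union>X \<inter> \<Union>Y\<close>.\<close>

lemma graph_finite: "graph V E \<Longrightarrow> finite V"
  by (simp add: graph_def)

lemma clique_extends_to_max_clique:
  assumes g: "graph V E" and "clique V E C"
  shows "\<exists>K. max_clique V E K \<and> C \<subseteq> K"
proof -
  let ?S = "{K. clique V E K \<and> C \<subseteq> K}"
  have "?S \<subseteq> Pow V" by (auto simp: clique_def)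
  then have "finite ?S" using graph_finite[OF g] by (meson finite_Pow_iff finite_subset)
  moreover have "?S \<noteq> {}" using assms by auto
  ultimately obtain M where M: "M \<in> ?S" and "\<forall>K\<in>?S. M \<le> K \<longrightarrow> M = K"
    by (meson finite_has_maximal)
  then have "max_clique V E M" unfolding max_clique_def by auto
  then show ?thesis using M by blast
qed

lemma vertex_in_max_clique:
  assumes "graph V E" and "v \<in> V"
  shows "\<exists>K. max_clique V E K \<and> v \<in> K"
  using clique_extends_to_max_clique[OF assms(1), of "{v}"] assms(2) by (auto simp: clique_def)

lemma edge_in_max_clique:
  assumes g: "graph V E" and "E x y"
  shows "\<exists>K. max_clique V E K \<and> x \<in> K \<and> y \<in> K"
proof -
  have "clique V E {x, y}" using assms unfolding clique_def graph_def by auto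
  then show ?thesis using clique_extends_to_max_clique[OF g] by blast
qed

lemma max_clique_adjacent: "max_clique V E K \<Longrightarrow> x \<in> K \<Longrightarrow> y \<in> K \<Longrightarrow> x \<noteq> y \<Longrightarrow> E x y"
  by (auto simp: max_clique_def clique_def)

lemma cq_equiv_adjacent:
  assumes g: "graph V E" and uw: "cq_equiv V E u w" and "u \<noteq> w"
  shows "E u w"
proof -
  obtain K where K: "max_clique V E K" "u \<in> K"
    using vertex_in_max_clique[OF g] uw by (auto simp: cq_equiv_def)
  then have "w \<in> K" using uw by (auto simp: cq_equiv_def)
  then show ?thesis using max_clique_adjacent[OF K] \<open>u \<noteq> w\<close> by blast
qed

lemma cq_equiv_if_same_class: "u \<in> cq_class V E v \<Longrightarrow> w \<in> cq_class V E v \<Longrightarrow> cq_equiv V E u w"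
  by (auto simp: cq_class_def cq_equiv_def)

lemma cq_class_subset: "cq_class V E v \<subseteq> V"
  by (auto simp: cq_class_def cq_equiv_def)

lemma cq_class_eq: "u \<in> cq_class V E v \<Longrightarrow> cq_class V E u = cq_class V E v"
  by (auto simp: cq_class_def cq_equiv_def)

lemma cq_class_clique:
  assumes g: "graph V E"
  shows "clique V E (cq_class V E v)"
  unfolding clique_def
proof (intro conjI ballI impI)
  fix x y assume "x \<in> cq_class V E v" "y \<in> cq_class V E v" "x \<noteq> y"
  then show "E x y" using cq_equiv_adjacent[OF g cq_equiv_if_same_class] by blast
qed (rule cq_class_subset)

lemma cq_V_clique: "graph V E \<Longrightarrow> P \<in> cq_V V E \<Longrightarrow> clique V E P"
  by (auto simp: cq_V_def cq_class_clique)

lemma cq_V_disjoint: "P \<in> cq_V V E \<Longrightarrow> Q \<in> cq_V V E \<Longrightarrow> u \<in> P \<Longrightarrow> u \<in> Q \<Longrightarrow> P = Q"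
  unfolding cq_V_def using cq_class_eq by (metis imageE)

lemma cq_V_equiv: "P \<in> cq_V V E \<Longrightarrow> u \<in> P \<Longrightarrow> w \<in> P \<Longrightarrow> cq_equiv V E u w"
  by (auto simp: cq_V_def cq_equiv_if_same_class)

lemma finite_cq_V: "graph V E \<Longrightarrow> finite (cq_V V E)"
  by (simp add: cq_V_def graph_finite)

lemma Union_cq_V_subset: "X \<subseteq> cq_V V E \<Longrightarrow> \<Union>X \<subseteq> V"
  using cq_class_subset by (fastforce simp: cq_V_def)

lemma theta_le_card_cover:
  assumes "finite C" "\<forall>K\<in>C. clique V E K \<and> K \<subseteq> S" "\<Union>C = S"
  shows "theta V E S \<le> card C"
  unfolding theta_def by (rule Least_le) (use assms in blast)

lemma theta_cover_exists:
  assumes g: "graph V E" and "S \<subseteq> V"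
  obtains C where "finite C" "card C = theta V E S" "\<forall>K\<in>C. clique V E K \<and> K \<subseteq> S" "\<Union>C = S"
proof -
  let ?cover = "\<lambda>n. \<exists>C. finite C \<and> card C = n \<and> (\<forall>K\<in>C. clique V E K \<and> K \<subseteq> S) \<and> \<Union>C = S"
  have "finite S" using assms graph_finite finite_subset by metis
  then have "?cover (card ((\<lambda>v. {v}) ` S))"
    using assms(2) by (intro exI[of _ "(\<lambda>v. {v}) ` S"]) (auto simp: clique_def)
  then have "?cover (theta V E S)"
    unfolding theta_def by (rule LeastI)
  then show ?thesis using that by blast
qed

lemma card_cq_tilde_max_clique_le:
  assumes g: "graph V E" and "max_clique V E K"
  shows "card (cq_tilde V E K) \<le> omega_tilde V E"
proof -
  have "{K. max_clique V E K} \<subseteq> Pow V" by (auto simp: max_clique_def clique_def)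
  then have "finite {K. max_clique V E K}"
    using graph_finite[OF g] by (meson finite_Pow_iff finite_subset)
  then have "finite {card {X \<in> cq_V V E. X \<inter> K \<noteq> {}} | K. max_clique V E K}"
    by (simp add: setcompr_eq_image)
  then show ?thesis
    unfolding omega_tilde_def cq_tilde_def by (rule Max_ge) (use assms(2) in blast)
qed

lemma cq_tilde_mono: "A \<subseteq> B \<Longrightarrow> cq_tilde V E A \<subseteq> cq_tilde V E B"
  by (auto simp: cq_tilde_def)

lemma card_cq_tilde_clique_le:
  assumes g: "graph V E" and "clique V E K"
  shows "card (cq_tilde V E K) \<le> omega_tilde V E"
proof -
  obtain M where M: "max_clique V E M" "K \<subseteq> M"
    using clique_extends_to_max_clique[OF assms] by blast
  have "finite (cq_tilde V E M)"
    using finite_cq_V[OF g] by (auto simp: cq_tilde_def)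
  then have "card (cq_tilde V E K) \<le> card (cq_tilde V E M)"
    using cq_tilde_mono[OF M(2)] by (rule card_mono)
  also have "\<dots> \<le> omega_tilde V E" by (rule card_cq_tilde_max_clique_le[OF g M(1)])
  finally show ?thesis .
qed

lemma card_cq_tilde_le_theta:
  assumes g: "graph V E" and "S \<subseteq> V"
  shows "card (cq_tilde V E S) \<le> theta V E S * omega_tilde V E"
proof -
  obtain C where C: "finite C" "card C = theta V E S" "\<forall>K\<in>C. clique V E K \<and> K \<subseteq> S" "\<Union>C = S"
    using theta_cover_exists[OF assms] .
  have "cq_tilde V E S = (\<Union>K\<in>C. cq_tilde V E K)"
    using C(4) by (auto simp: cq_tilde_def)
  then have "card (cq_tilde V E S) \<le> (\<Sum>K\<in>C. card (cq_tilde V E K))"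
    using card_UN_le[OF C(1)] by simp
  also have "\<dots> \<le> (\<Sum>K\<in>C. omega_tilde V E)"
    using card_cq_tilde_clique_le[OF g] C(3) by (intro sum_mono) blast
  also have "\<dots> = theta V E S * omega_tilde V E" using C(2) by simp
  finally show ?thesis .
qed

lemma separation_cq_tilde:
  assumes g: "graph V E" and sep: "separation V E A B"
  shows "separation (cq_V V E) (cq_E V E) (cq_tilde V E A) (cq_tilde V E B)"
  unfolding separation_def
proof (intro conjI ballI notI)
  show "cq_tilde V E A \<subseteq> cq_V V E" "cq_tilde V E B \<subseteq> cq_V V E" by (auto simp: cq_tilde_def)
  fix P Q assume P: "P \<in> cq_tilde V E A - cq_tilde V E B" and Q: "Q \<in> cq_tilde V E B - cq_tilde V E A"
    and "cq_E V E P Q"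
  then obtain x y where xy: "x \<in> P" "y \<in> Q" "E x y" by (auto simp: cq_E_def)
  obtain a where a: "a \<in> P" "a \<in> A - B" using P by (auto simp: cq_tilde_def)
  obtain b where b: "b \<in> Q" "b \<in> B - A" using Q by (auto simp: cq_tilde_def)
  obtain K where K: "max_clique V E K" "x \<in> K" "y \<in> K" using edge_in_max_clique[OF g xy(3)] by blast
  have "a \<in> K" using cq_V_equiv[of P V E x a] P xy a K(1,2) by (auto simp: cq_tilde_def cq_equiv_def)
  moreover have "b \<in> K" using cq_V_equiv[of Q V E y b] Q xy b K(1,3) by (auto simp: cq_tilde_def cq_equiv_def)
  ultimately have "E a b" using max_clique_adjacent[OF K(1)] a b by blast
  then show False using sep a b by (auto simp: separation_def)
qed

lemma cq_tilde_Int_subset_separator: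
  assumes g: "graph V E" and sep: "separation V E A B"
  shows "cq_tilde V E A \<inter> cq_tilde V E B \<subseteq> cq_tilde V E (A \<inter> B)"
proof
  fix P assume P: "P \<in> cq_tilde V E A \<inter> cq_tilde V E B"
  then obtain a b where ab: "a \<in> P" "a \<in> A" "b \<in> P" "b \<in> B" and PV: "P \<in> cq_V V E"
    by (auto simp: cq_tilde_def)
  have "P \<inter> (A \<inter> B) \<noteq> {}"
  proof (cases "a \<in> B \<or> b \<in> A")
    case False
    then have "E a b" using cq_equiv_adjacent[OF g cq_V_equiv[OF PV ab(1,3)]] ab by auto
    then show ?thesis using sep ab False by (auto simp: separation_def)
  qed (use ab in auto)
  then show "P \<in> cq_tilde V E (A \<inter> B)" using PV by (simp add: cq_tilde_def)
qed

lemma separation_Union_cq: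
  assumes sep: "separation (cq_V V E) (cq_E V E) X Y"
  shows "separation V E (\<Union>X) (\<Union>Y)"
  unfolding separation_def
proof (intro conjI ballI notI)
  have XY: "X \<subseteq> cq_V V E" "Y \<subseteq> cq_V V E" using sep by (auto simp: separation_def)
  then show "\<Union>X \<subseteq> V" "\<Union>Y \<subseteq> V" by (auto dest: Union_cq_V_subset)
  fix x y assume x: "x \<in> \<Union>X - \<Union>Y" and y: "y \<in> \<Union>Y - \<Union>X" and "E x y"
  then obtain P Q where PQ: "P \<in> X - Y" "x \<in> P" "Q \<in> Y - X" "y \<in> Q" by auto
  then have "cq_E V E P Q" using XY \<open>E x y\<close> by (auto simp: cq_E_def)
  then show False using sep PQ by (auto simp: separation_def)
qed

lemma Union_Int_Union_cq_V:
  assumes "X \<subseteq> cq_V V E" "Y \<subseteq> cq_V V E"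
  shows "\<Union>X \<inter> \<Union>Y = \<Union>(X \<inter> Y)"
proof (intro equalityI subsetI)
  fix u assume "u \<in> \<Union>X \<inter> \<Union>Y"
  then obtain P Q where PQ: "P \<in> X" "Q \<in> Y" "u \<in> P" "u \<in> Q" by blast
  then have "P = Q" using assms by (intro cq_V_disjoint[of P V E Q u]) auto
  then show "u \<in> \<Union>(X \<inter> Y)" using PQ by blast
qed auto

lemma theta_Union_cq_V_le:
  assumes g: "graph V E" and "Z \<subseteq> cq_V V E"
  shows "theta V E (\<Union>Z) \<le> card Z"
proof (rule theta_le_card_cover)
  show "finite Z" using assms(2) finite_cq_V[OF g] by (rule finite_subset)
  show "\<forall>K\<in>Z. clique V E K \<and> K \<subseteq> \<Union>Z" using assms cq_V_clique by blast
qed simp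

lemma card_cq_tilde_Int_le_theta:
  assumes g: "graph V E" and sep: "separation V E A B"
  shows "card (cq_tilde V E A \<inter> cq_tilde V E B) \<le> theta V E (A \<inter> B) * omega_tilde V E"
proof -
  have "finite (cq_tilde V E (A \<inter> B))" using finite_cq_V[OF g] by (simp add: cq_tilde_def)
  then have "card (cq_tilde V E A \<inter> cq_tilde V E B) \<le> card (cq_tilde V E (A \<inter> B))"
    using cq_tilde_Int_subset_separator[OF g sep] by (rule card_mono)
  also have "\<dots> \<le> theta V E (A \<inter> B) * omega_tilde V E"
    using sep by (intro card_cq_tilde_le_theta[OF g]) (auto simp: separation_def)
  finally show ?thesis .
qed

lemma theta_Union_Int_Union_le_card:
  assumes g: "graph V E" and sep: "separation (cq_V V E) (cq_E V E) X Y"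
  shows "theta V E (\<Union>X \<inter> \<Union>Y) \<le> card (X \<inter> Y)"
proof -
  have XY: "X \<subseteq> cq_V V E" "Y \<subseteq> cq_V V E" using sep by (auto simp: separation_def)
  then have "X \<inter> Y \<subseteq> cq_V V E" by blast
  then show ?thesis unfolding Union_Int_Union_cq_V[OF XY] by (rule theta_Union_cq_V_le[OF g])
qed

theorem lemma4p1:
  fixes V :: "'a set" and E :: "'a \<Rightarrow> 'a \<Rightarrow> bool" and k :: nat
  assumes "graph V E" and "k > 0"
  shows "(\<forall>A B. separation V E A B \<and> theta V E (A \<inter> B) = k \<longrightarrow>
            separation (cq_V V E) (cq_E V E) (cq_tilde V E A) (cq_tilde V E B) \<and>
            card (cq_tilde V E A \<inter> cq_tilde V E B) \<le> k * omega_tilde V E)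
       \<and> (\<forall>X Y. separation (cq_V V E) (cq_E V E) X Y \<and> card (X \<inter> Y) = k \<longrightarrow>
            separation V E (\<Union>X) (\<Union>Y) \<and> theta V E (\<Union>X \<inter> \<Union>Y) \<le> k)"
proof (intro conjI allI impI; elim conjE)
  fix A B assume "separation V E A B" and "theta V E (A \<inter> B) = k"
  then show "separation (cq_V V E) (cq_E V E) (cq_tilde V E A) (cq_tilde V E B)"
    and "card (cq_tilde V E A \<inter> cq_tilde V E B) \<le> k * omega_tilde V E"
    using separation_cq_tilde card_cq_tilde_Int_le_theta \<open>graph V E\<close> by auto
next
  fix X Y assume "separation (cq_V V E) (cq_E V E) X Y" and "card (X \<inter> Y) = k"
  then show "separation V E (\<Union>X) (\<Union>Y)" and "theta V E (\<Union>X \<inter> \<Union>Y) \<le> k"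
    using separation_Union_cq theta_Union_Int_Union_le_card \<open>graph V E\<close> by auto
qed

end
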